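(* For integers $n_1\ge n_2\ge0$, let $$A(n_1,n_2)=\sum_{i=0}^{n_2}\binom{n_2}{i}\,n_1(n_1-1)\cdots(n_1-i+1),$$ where the $i=0$ term is $1$. Then: - if $n_1\ge2$, $A(n_1,n_2)\le\frac{n_1}{n_1-1}\,n_1^{n_2}$; - if $n_2\ge4$, $A(n_1,n_2)\le n_1^{n_2}$. *)

theory Defs
  imports Complex_Main
begin

definition falling :: "nat \<Rightarrow> nat \<Rightarrow> nat" where
  "falling n i = (\<Prod>j<i. n - j)"

definition A :: "nat \<Rightarrow> nat \<Rightarrow> nat" where
  "A n1 n2 = (\<Sum>i = 0..n2. (n2 choose i) * falling n1 i)"

end

theory Submission
  imports Defs
begin

(* Write S_m(x) for the sum of (m choose i) x(x-1)...(x-i+1) over i <= m, so that A n m = S_m(n).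
   Pascal's rule and the absorption identity i (m choose i) = m (m-1 choose i-1) give the
   recurrence S_(m+2) = (x - m) S_(m+1) + (m+1) S_m.  Since (x - k) x + k + 1 <= x^2 as soon as
   k (x - 1) >= 1, a bound S_m <= c x^m holding at two consecutive indices m >= 1 propagates
   along the recurrence as long as m <= x.  So both claims reduce to base cases: c = x/(x-1) at
   m = 1, 2 (where (x - 1)(x^2 + x + 1) = x^3 - 1), and c = 1 at m = 4, 5, read off the
   explicit polynomials S_4 and S_5. *)

definition falling_factorial :: "'a::comm_ring_1 \<Rightarrow> nat \<Rightarrow> 'a" where
  "falling_factorial x i = (\<Prod>j<i. x - of_nat j)"

definition falling_binomial_sum :: "'a::comm_ring_1 \<Rightarrow> nat \<Rightarrow> 'a" where
  "falling_binomial_sum x m = (\<Sum>i\<le>m. of_nat (m choose i) * falling_factorial x i)"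

lemma falling_factorial_0 [simp]: "falling_factorial x 0 = 1"
  by (simp add: falling_factorial_def)

lemma falling_factorial_Suc: "falling_factorial x (Suc i) = falling_factorial x i * (x - of_nat i)"
  by (simp add: falling_factorial_def)

lemma of_nat_falling: "of_nat (falling n i) = falling_factorial (of_nat n) i"
proof (cases "i \<le> n")
  case True
  then show ?thesis
    by (simp add: falling_def falling_factorial_def of_nat_diff)
next
  case False
  then have "n \<in> {..<i}" by simp
  then have "falling n i = 0" and "falling_factorial (of_nat n :: 'a) i = 0"
    unfolding falling_def falling_factorial_def by (auto intro!: prod_zero bexI[of _ n])
  then show ?thesis by simp
qed

lemma of_nat_A: "of_nat (A n m) = falling_binomial_sum (of_nat n) m"
  by (simp add: A_def falling_binomial_sum_def of_nat_falling atLeast0AtMost)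

lemma falling_binomial_sum_Suc:
  "falling_binomial_sum x (Suc m) =
     falling_binomial_sum x m + (\<Sum>i\<le>m. of_nat (m choose i) * falling_factorial x (Suc i))"
proof -
  have extend: "falling_binomial_sum x m = (\<Sum>i\<le>Suc m. of_nat (m choose i) * falling_factorial x i)"
    by (simp add: falling_binomial_sum_def binomial_eq_0)
  show ?thesis
    unfolding extend unfolding falling_binomial_sum_def sum.atMost_Suc_shift
    by (simp add: sum.distrib algebra_simps del: sum.atMost_Suc)
qed

lemma index_weighted_falling_binomial_sum:
  "(\<Sum>i\<le>Suc m. of_nat (i * (Suc m choose i)) * falling_factorial x i) =
     of_nat (Suc m) * (\<Sum>i\<le>m. of_nat (m choose i) * falling_factorial x (Suc i))"
  unfolding sum.atMost_Suc_shift Suc_times_binomial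
  by (simp add: sum_distrib_left algebra_simps del: binomial_Suc_Suc sum.atMost_Suc)

lemma falling_binomial_sum_Suc_Suc:
  "falling_binomial_sum x (Suc (Suc m)) =
     (x - of_nat m) * falling_binomial_sum x (Suc m) + of_nat (Suc m) * falling_binomial_sum x m"
proof -
  define T where "T k = (\<Sum>i\<le>k. of_nat (k choose i) * falling_factorial x (Suc i))" for k
  have "T (Suc m) = (\<Sum>i\<le>Suc m. of_nat (Suc m choose i) * falling_factorial x i * (x - of_nat i))"
    by (simp add: T_def falling_factorial_Suc mult.assoc del: sum.atMost_Suc)
  also have "\<dots> = x * falling_binomial_sum x (Suc m)
      - (\<Sum>i\<le>Suc m. of_nat (i * (Suc m choose i)) * falling_factorial x i)"
    unfolding falling_binomial_sum_def
    by (simp add: sum_distrib_left sum_subtractf[symmetric] algebra_simps del: sum.atMost_Suc)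
  also have "\<dots> = x * falling_binomial_sum x (Suc m) - of_nat (Suc m) * T m"
    by (simp only: index_weighted_falling_binomial_sum T_def)
  finally have "T (Suc m) = x * falling_binomial_sum x (Suc m) - of_nat (Suc m) * T m" .
  moreover have "falling_binomial_sum x (Suc k) = falling_binomial_sum x k + T k" for k
    by (simp add: T_def falling_binomial_sum_Suc del: sum.atMost_Suc)
  ultimately show ?thesis
    by (simp add: algebra_simps)
qed

lemma falling_binomial_sum_closed_forms:
  "falling_binomial_sum x 0 = 1"
  "falling_binomial_sum x 1 = x + 1"
  "falling_binomial_sum x 2 = x^2 + x + 1"
  "falling_binomial_sum x 4 = x^4 - 2*x^3 + 5*x^2 + 1"
  "falling_binomial_sum x 5 = x^5 - 5*x^4 + 15*x^3 - 15*x^2 + 9*x + 1"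
  by (simp_all add: falling_binomial_sum_def falling_factorial_def eval_nat_numeral algebra_simps)

lemma falling_binomial_sum_le_scaled_power:
  fixes x c :: real
  assumes "0 \<le> c" "1 \<le> n"
    and base: "falling_binomial_sum x n \<le> c * x ^ n"
    and base_Suc: "falling_binomial_sum x (Suc n) \<le> c * x ^ Suc n"
    and "n \<le> m" "real m \<le> x"
  shows "falling_binomial_sum x m \<le> c * x ^ m"
  using assms(5,6)
proof (induction m rule: less_induct)
  case (less m)
  consider "m = n" | "m = Suc n" | k where "m = Suc (Suc k)" "n \<le> k"
  proof -
    have "m = n \<or> m = Suc n \<or> (\<exists>k. m = Suc (Suc k) \<and> n \<le> k)"
      using \<open>n \<le> m\<close> by presburger
    with that show thesis by blast
  qed
  then show ?case
  proof cases
    case 3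
    with less.prems \<open>1 \<le> n\<close> have k: "1 \<le> real k" "real k + 2 \<le> x" by auto
    have IH: "falling_binomial_sum x (Suc k) \<le> c * x ^ Suc k" "falling_binomial_sum x k \<le> c * x ^ k"
      using less.IH[of "Suc k"] less.IH[of k] 3 less.prems by auto
    have "(x - real k) * x + real k + 1 \<le> x ^ 2"
    proof -
      have "1 * 1 \<le> real k * (x - 1)" using k by (intro mult_mono) auto
      then show ?thesis by (simp add: algebra_simps power2_eq_square)
    qed
    have "falling_binomial_sum x m
        = (x - real k) * falling_binomial_sum x (Suc k) + real (Suc k) * falling_binomial_sum x k"
      using 3 by (simp add: falling_binomial_sum_Suc_Suc)
    also have "\<dots> \<le> (x - real k) * (c * x ^ Suc k) + real (Suc k) * (c * x ^ k)"
      using IH k by (intro add_mono mult_left_mono) auto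
    also have "\<dots> = c * x ^ k * ((x - real k) * x + real k + 1)"
      by (simp add: algebra_simps)
    also have "\<dots> \<le> c * x ^ k * x ^ 2"
      using \<open>0 \<le> c\<close> k \<open>(x - real k) * x + real k + 1 \<le> x ^ 2\<close> by (intro mult_left_mono) auto
    also have "\<dots> = c * x ^ m"
      using 3 by (simp add: power_add[symmetric])
    finally show ?thesis .
  qed (use base base_Suc in auto)
qed

lemma falling_binomial_sum_le_geometric:
  fixes x :: real
  assumes "2 \<le> x" "real m \<le> x"
  shows "falling_binomial_sum x m \<le> x / (x - 1) * x ^ m"
proof (cases "m = 0")
  case True
  then show ?thesis using assms by (simp add: falling_binomial_sum_closed_forms)
next
  case False
  have "(x + 1) * (x - 1) \<le> x * x" and "(x^2 + x + 1) * (x - 1) \<le> x * x ^ 2"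
    by (simp_all add: algebra_simps power2_eq_square)
  with assms have "x + 1 \<le> x / (x - 1) * x ^ 1" and "x^2 + x + 1 \<le> x / (x - 1) * x ^ 2"
    by (simp_all add: pos_le_divide_eq)
  then have base: "falling_binomial_sum x 1 \<le> x / (x - 1) * x ^ 1"
    and base_Suc: "falling_binomial_sum x (Suc 1) \<le> x / (x - 1) * x ^ Suc 1"
    by (simp_all only: falling_binomial_sum_closed_forms Suc_1)
  have "0 \<le> x / (x - 1)"
    using assms by simp
  from falling_binomial_sum_le_scaled_power[OF this _ base base_Suc] False assms show ?thesis
    by simp
qed

lemma falling_binomial_sum_le_power:
  fixes x :: real
  assumes "4 \<le> m" "real m \<le> x"
  shows "falling_binomial_sum x m \<le> x ^ m"
proof -
  have x: "4 \<le> x" using assms by linarith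
  have "4 * 4 \<le> x * x"
    using x by (intro mult_mono) auto
  then have "4 * 4 * 3 \<le> x * x * (2 * x - 5)"
    using x by (intro mult_mono) auto
  then have "falling_binomial_sum x 4 \<le> x ^ 4"
    by (simp add: falling_binomial_sum_closed_forms algebra_simps power2_eq_square power3_eq_cube)
  moreover have "falling_binomial_sum x 5 \<le> x ^ 5"
  proof -
    have "0 \<le> 5 * x^3 * (x - 3)"
      using x by simp
    moreover have "4 * 51 \<le> x * (15 * x - 9)"
      using x by (intro mult_mono) auto
    ultimately show ?thesis
      unfolding falling_binomial_sum_closed_forms by (simp add: algebra_simps eval_nat_numeral)
  qed
  ultimately show ?thesis
    using falling_binomial_sum_le_scaled_power[of 1 4 x m] assms by simp
qed

theorem mainTheorem4:
  fixes n1 n2 :: nat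
  assumes "n1 \<ge> n2"
  shows "(n1 \<ge> 2 \<longrightarrow> real (A n1 n2) \<le> real n1 / (real n1 - 1) * real n1 ^ n2)
       \<and> (n2 \<ge> 4 \<longrightarrow> A n1 n2 \<le> n1 ^ n2)"
proof (intro conjI impI)
  assume "n1 \<ge> 2"
  then show "real (A n1 n2) \<le> real n1 / (real n1 - 1) * real n1 ^ n2"
    unfolding of_nat_A using assms by (intro falling_binomial_sum_le_geometric) auto
next
  assume "n2 \<ge> 4"
  then have "real (A n1 n2) \<le> real n1 ^ n2"
    unfolding of_nat_A using assms by (intro falling_binomial_sum_le_power) auto
  then show "A n1 n2 \<le> n1 ^ n2"
    by (simp only: of_nat_power[symmetric] of_nat_le_iff)
qed

end
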